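(* Let $n\geq1$. The assignment $\rho_i\mapsto\sigma_1\sigma_2\cdots\sigma_i$ ($1\leq i\leq n$) extends to a group isomorphism from the group with presentation $$\langle\rho_1,\dots,\rho_n\mid\rho_1\rho_j\rho_i=\rho_{i+1}\rho_j\ \text{for } 1\leq i<j\leq n\rangle$$ onto the braid group $\mathcal{B}_{n+1}$; its inverse sends $\sigma_i\mapsto\rho_{i-1}^{-1}\rho_i$ (with $\rho_0=1$). Under this isomorphism, the image of the monoid $\mathcal{H}_n^+$ with the same presentation is the submonoid $\Sigma_n$ of $\mathcal{B}_{n+1}$.
   Context: $\mathcal{B}_{n+1}$ is the braid group with generators $\sigma_1,\dots,\sigma_n$ and relations $\sigma_i\sigma_{i+1}\sigma_i=\sigma_{i+1}\sigma_i\sigma_{i+1}$ ($1\leq i<n$), $\sigma_i\sigma_j=\sigma_j\sigma_i$ ($|i-j|>1$). $\mathcal{H}_n^+$ is the monoid with generators $\rho_1,\dots,\rho_n$ and relations $\rho_1\rho_j\rho_i=\rho_{i+1}\rho_j$ for $1\leq i<j\leq n$. $\Sigma_n$ is the submonoid of $\mathcal{B}_{n+1}$ generated by $\sigma_1,\ \sigma_1\sigma_2,\ \dots,\ \sigma_1\sigma_2\cdots\sigma_n$. *)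

theory Defs
  imports "HOL-Algebra.Group"
begin

text \<open>A letter is a pair (generator, inverted?); True means the formal inverse.
  Words over a generator set S are lists of letters whose generators lie in S.\<close>

type_synonym 'a gword = "('a \<times> bool) list"

definition gwords :: "'a set \<Rightarrow> 'a gword set" where
  "gwords S = {w. fst ` set w \<subseteq> S}"

definition pos_word :: "'a list \<Rightarrow> 'a gword" where
  "pos_word l = map (\<lambda>x. (x, False)) l"

text \<open>The congruence on words over S generated by free cancellation and the
  defining relations R (pairs of positive words l = r).\<close>

inductive pres_rel :: "'a set \<Rightarrow> ('a list \<times> 'a list) set \<Rightarrow> 'a gword \<Rightarrow> 'a gword \<Rightarrow> bool"
  for S R where
  refl: "w \<in> gwords S \<Longrightarrow> pres_rel S R w w"
| sym: "pres_rel S R u w \<Longrightarrow> pres_rel S R w u"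
| trans: "pres_rel S R u v \<Longrightarrow> pres_rel S R v w \<Longrightarrow> pres_rel S R u w"
| cancel: "u \<in> gwords S \<Longrightarrow> v \<in> gwords S \<Longrightarrow> a \<in> S \<Longrightarrow>
    pres_rel S R (u @ [(a, b), (a, \<not> b)] @ v) (u @ v)"
| rel: "(l, r) \<in> R \<Longrightarrow> u \<in> gwords S \<Longrightarrow> v \<in> gwords S \<Longrightarrow>
    pres_rel S R (u @ pos_word l @ v) (u @ pos_word r @ v)"

definition pres_class :: "'a set \<Rightarrow> ('a list \<times> 'a list) set \<Rightarrow> 'a gword \<Rightarrow> 'a gword set" where
  "pres_class S R w = {v. pres_rel S R w v}"

text \<open>The group \<langle>S | R\<rangle> (relations assumed to be words over S).\<close>

definition pres_group :: "'a set \<Rightarrow> ('a list \<times> 'a list) set \<Rightarrow> 'a gword set monoid" where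
  "pres_group S R =
     \<lparr>carrier = pres_class S R ` gwords S,
      mult = (\<lambda>A B. \<Union>a\<in>A. \<Union>b\<in>B. pres_class S R (a @ b)),
      one = pres_class S R []\<rparr>"

definition pres_gen :: "'a set \<Rightarrow> ('a list \<times> 'a list) set \<Rightarrow> 'a \<Rightarrow> 'a gword set" where
  "pres_gen S R x = pres_class S R [(x, False)]"

inductive mpres_rel :: "'a set \<Rightarrow> ('a list \<times> 'a list) set \<Rightarrow> 'a list \<Rightarrow> 'a list \<Rightarrow> bool"
  for S R where
  refl: "set w \<subseteq> S \<Longrightarrow> mpres_rel S R w w"
| sym: "mpres_rel S R u w \<Longrightarrow> mpres_rel S R w u"
| trans: "mpres_rel S R u v \<Longrightarrow> mpres_rel S R v w \<Longrightarrow> mpres_rel S R u w"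
| rel: "(l, r) \<in> R \<Longrightarrow> set u \<subseteq> S \<Longrightarrow> set v \<subseteq> S \<Longrightarrow>
    mpres_rel S R (u @ l @ v) (u @ r @ v)"

definition mpres_class :: "'a set \<Rightarrow> ('a list \<times> 'a list) set \<Rightarrow> 'a list \<Rightarrow> 'a list set" where
  "mpres_class S R w = {v. mpres_rel S R w v}"

definition mpres_monoid :: "'a set \<Rightarrow> ('a list \<times> 'a list) set \<Rightarrow> 'a list set monoid" where
  "mpres_monoid S R =
     \<lparr>carrier = mpres_class S R ` lists S,
      mult = (\<lambda>A B. \<Union>a\<in>A. \<Union>b\<in>B. mpres_class S R (a @ b)),
      one = mpres_class S R []\<rparr>"

text \<open>The canonical monoid homomorphism \<langle>S | R\<rangle>^+ \<rightarrow> \<langle>S | R\<rangle>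
  (well defined: equal classes are sent to equal classes).\<close>

definition mon_to_grp :: "'a set \<Rightarrow> ('a list \<times> 'a list) set \<Rightarrow> 'a list set \<Rightarrow> 'a gword set" where
  "mon_to_grp S R C = pres_class S R (pos_word (SOME w. w \<in> C))"

inductive_set monoid_generated :: "('a, 'b) monoid_scheme \<Rightarrow> 'a set \<Rightarrow> 'a set"
  for M A where
  one: "\<one>\<^bsub>M\<^esub> \<in> monoid_generated M A"
| step: "x \<in> monoid_generated M A \<Longrightarrow> a \<in> A \<Longrightarrow> x \<otimes>\<^bsub>M\<^esub> a \<in> monoid_generated M A"

definition braid_rels :: "nat \<Rightarrow> (nat list \<times> nat list) set" where
  "braid_rels n =
     {([i, i+1, i], [i+1, i, i+1]) | i. 1 \<le> i \<and> i < n}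
     \<union> {([i, j], [j, i]) | i j. i \<in> {1..n} \<and> j \<in> {1..n} \<and> (i + 1 < j \<or> j + 1 < i)}"

text \<open>B_{n+1}, generators sigma_1, ..., sigma_n.\<close>
definition Braid :: "nat \<Rightarrow> nat gword set monoid" where
  "Braid n = pres_group {1..n} (braid_rels n)"

definition sigma :: "nat \<Rightarrow> nat \<Rightarrow> nat gword set" where
  "sigma n i = pres_gen {1..n} (braid_rels n) i"

definition sigma_prefix :: "nat \<Rightarrow> nat \<Rightarrow> nat gword set" where
  "sigma_prefix n i = pres_class {1..n} (braid_rels n) (pos_word [1..<i+1])"

definition Sigma_mon :: "nat \<Rightarrow> nat gword set set" where
  "Sigma_mon n = monoid_generated (Braid n) (sigma_prefix n ` {1..n})"

definition H_rels :: "nat \<Rightarrow> (nat list \<times> nat list) set" where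
  "H_rels n = {([1, j, i], [i+1, j]) | i j. 1 \<le> i \<and> i < j \<and> j \<le> n}"

definition Hgrp :: "nat \<Rightarrow> nat gword set monoid" where
  "Hgrp n = pres_group {1..n} (H_rels n)"

definition Hmon :: "nat \<Rightarrow> nat list set monoid" where
  "Hmon n = mpres_monoid {1..n} (H_rels n)"

definition rho :: "nat \<Rightarrow> nat \<Rightarrow> nat gword set" where
  "rho n i = (if i = 0 then \<one>\<^bsub>Hgrp n\<^esub> else pres_gen {1..n} (H_rels n) i)"

definition Hmon_image :: "nat \<Rightarrow> nat gword set set" where
  "Hmon_image n = mon_to_grp {1..n} (H_rels n) ` carrier (Hmon n)"

end

theory Submission
  imports Defs
begin

text \<open>Write \<open>p\<^sub>i = \<sigma>\<^sub>1 \<cdots> \<sigma>\<^sub>i\<close>. The braid relations give \<open>p\<^sub>j \<sigma>\<^sub>k = \<sigma>\<^sub>k\<^sub>+\<^sub>1 p\<^sub>j\<close> for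
  \<open>k < j\<close>, hence \<open>p\<^sub>j p\<^sub>i = (\<sigma>\<^sub>2 \<cdots> \<sigma>\<^sub>i\<^sub>+\<^sub>1) p\<^sub>j\<close> for \<open>i < j\<close>, and multiplying by
  \<open>p\<^sub>1 = \<sigma>\<^sub>1\<close> on the left yields the relations \<open>p\<^sub>1 p\<^sub>j p\<^sub>i = p\<^sub>i\<^sub>+\<^sub>1 p\<^sub>j\<close> of \<open>H\<^sub>n\<close>.
  Conversely, in \<open>H\<^sub>n\<close> the elements \<open>\<tau>\<^sub>i = \<rho>\<^sub>i\<^sub>-\<^sub>1\<inverse> \<rho>\<^sub>i\<close> satisfy
  \<open>\<rho>\<^sub>j \<tau>\<^sub>k = \<tau>\<^sub>k\<^sub>+\<^sub>1 \<rho>\<^sub>j\<close> for \<open>k < j\<close>, from which the braid relations for the \<open>\<tau>\<^sub>i\<close>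
  follow. So \<open>\<rho>\<^sub>i \<mapsto> p\<^sub>i\<close> and \<open>\<sigma>\<^sub>i \<mapsto> \<tau>\<^sub>i\<close> define homomorphisms between the
  presented groups; they are mutually inverse because \<open>\<sigma>\<^sub>i = p\<^sub>i\<^sub>-\<^sub>1\<inverse> p\<^sub>i\<close> and
  \<open>\<rho>\<^sub>i = \<tau>\<^sub>1 \<cdots> \<tau>\<^sub>i\<close>. Finally \<open>H\<^sub>n\<^sup>+\<close> consists of the classes of positive words in the
  \<open>\<rho>\<^sub>i\<close>, whose images are exactly the positive words in the \<open>p\<^sub>i\<close>, i.e. \<open>\<Sigma>\<^sub>n\<close>.\<close>

section \<open>Presented groups\<close>

definition rels_over :: "'a set \<Rightarrow> ('a list \<times> 'a list) set \<Rightarrow> bool" where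
  "rels_over S R \<longleftrightarrow> (\<forall>(l, r)\<in>R. set l \<subseteq> S \<and> set r \<subseteq> S)"

lemma gwords_append [simp]: "u @ v \<in> gwords S \<longleftrightarrow> u \<in> gwords S \<and> v \<in> gwords S"
  by (auto simp: gwords_def)

lemma gwords_Cons [simp]: "x # v \<in> gwords S \<longleftrightarrow> fst x \<in> S \<and> v \<in> gwords S"
  by (auto simp: gwords_def)

lemma gwords_Nil [simp]: "[] \<in> gwords S"
  by (auto simp: gwords_def)

lemma pos_word_in_gwords [simp]: "pos_word l \<in> gwords S \<longleftrightarrow> set l \<subseteq> S"
  by (simp add: gwords_def pos_word_def image_image)

lemma pos_word_append [simp]: "pos_word (u @ v) = pos_word u @ pos_word v"
  by (simp add: pos_word_def)

lemma pos_word_simps [simp]: "pos_word [] = []" "pos_word (a # l) = (a, False) # pos_word l"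
  by (simp_all add: pos_word_def)

lemma pres_rel_gwords:
  assumes "pres_rel S R u v" "rels_over S R"
  shows "u \<in> gwords S \<and> v \<in> gwords S"
  using assms by (induction rule: pres_rel.induct) (auto simp: rels_over_def)

lemma pres_rel_append_right:
  assumes "pres_rel S R u v" "w \<in> gwords S" "rels_over S R"
  shows "pres_rel S R (u @ w) (v @ w)"
  using assms
proof (induction rule: pres_rel.induct)
  case (cancel u v a b)
  then show ?case using pres_rel.cancel[of u S "v @ w" a R b] by simp
next
  case (rel l r u v)
  then show ?case using pres_rel.rel[of l r R u S "v @ w"] by simp
qed (auto intro: pres_rel.refl pres_rel.sym pres_rel.trans)

lemma pres_rel_append_left:
  assumes "pres_rel S R u v" "w \<in> gwords S" "rels_over S R"
  shows "pres_rel S R (w @ u) (w @ v)"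
  using assms
proof (induction rule: pres_rel.induct)
  case (cancel u v a b)
  then show ?case using pres_rel.cancel[of "w @ u" S v a R b] by simp
next
  case (rel l r u v)
  then show ?case using pres_rel.rel[of l r R "w @ u" S v] by simp
qed (auto intro: pres_rel.refl pres_rel.sym pres_rel.trans)

lemma pres_rel_append:
  assumes "pres_rel S R a a'" "pres_rel S R b b'" "rels_over S R"
  shows "pres_rel S R (a @ b) (a' @ b')"
proof -
  have "pres_rel S R (a @ b) (a' @ b)"
    using assms pres_rel_append_right pres_rel_gwords by blast
  moreover have "pres_rel S R (a' @ b) (a' @ b')"
    using assms pres_rel_append_left pres_rel_gwords by blast
  ultimately show ?thesis by (rule pres_rel.trans)
qed

lemma pres_class_eq:
  assumes "pres_rel S R u v"
  shows "pres_class S R u = pres_class S R v"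
  using pres_rel.trans[OF assms] pres_rel.trans[OF pres_rel.sym[OF assms]]
  unfolding pres_class_def by blast

lemma pres_class_self: "w \<in> gwords S \<Longrightarrow> w \<in> pres_class S R w"
  by (simp add: pres_class_def pres_rel.refl)

lemma pres_group_carrier: "carrier (pres_group S R) = pres_class S R ` gwords S"
  by (simp add: pres_group_def)

lemma pres_group_one: "\<one>\<^bsub>pres_group S R\<^esub> = pres_class S R []"
  by (simp add: pres_group_def)

lemma pres_group_mult:
  assumes "a \<in> gwords S" "b \<in> gwords S" "rels_over S R"
  shows "pres_class S R a \<otimes>\<^bsub>pres_group S R\<^esub> pres_class S R b = pres_class S R (a @ b)"
proof -
  have "pres_class S R (a' @ b') = pres_class S R (a @ b)"
    if "a' \<in> pres_class S R a" "b' \<in> pres_class S R b" for a' b'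
  proof -
    have "pres_rel S R a a'" "pres_rel S R b b'" using that by (auto simp: pres_class_def)
    then show ?thesis using pres_rel_append assms(3) pres_class_eq by metis
  qed
  moreover have "a \<in> pres_class S R a" "b \<in> pres_class S R b"
    using assms by (auto simp: pres_class_self)
  ultimately have "(\<Union>a'\<in>pres_class S R a. \<Union>b'\<in>pres_class S R b. pres_class S R (a' @ b'))
      = pres_class S R (a @ b)"
    by blast
  then show ?thesis unfolding pres_group_def by simp
qed

definition inverse_word :: "'a gword \<Rightarrow> 'a gword" where
  "inverse_word w = rev (map (\<lambda>(a, b). (a, \<not> b)) w)"

lemma inverse_word_in_gwords [simp]: "inverse_word w \<in> gwords S \<longleftrightarrow> w \<in> gwords S"
proof -
  have "fst ` set (inverse_word w) = fst ` set w"
    by (simp add: inverse_word_def image_image case_prod_beta)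
  then show ?thesis by (simp add: gwords_def)
qed

lemma inverse_word_inverse_word [simp]: "inverse_word (inverse_word w) = w"
  by (induction w) (auto simp: inverse_word_def)

lemma pres_rel_append_inverse_word:
  assumes "w \<in> gwords S" "rels_over S R"
  shows "pres_rel S R (w @ inverse_word w) []"
  using assms(1)
proof (induction w)
  case Nil
  then show ?case by (simp add: inverse_word_def pres_rel.refl)
next
  case (Cons x w)
  obtain a b where x: "x = (a, b)" by (cases x)
  have a: "a \<in> S" and w: "w \<in> gwords S" using Cons.prems x by auto
  have "pres_rel S R ([x] @ (w @ inverse_word w) @ [(a, \<not> b)]) ([x] @ [] @ [(a, \<not> b)])"
    using pres_rel_append_right[OF Cons.IH[OF w]] pres_rel_append_left a w x assms(2)
    by (metis append_Nil gwords_Cons gwords_Nil fst_conv)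
  moreover have "pres_rel S R ([] @ [(a, b), (a, \<not> b)] @ []) []"
    using pres_rel.cancel[of "[]" S "[]" a R b] a by simp
  ultimately show ?case
    using pres_rel.trans x by (fastforce simp: inverse_word_def)
qed

lemma group_pres_group:
  assumes "rels_over S R"
  shows "group (pres_group S R)"
proof (rule groupI)
  fix x y
  assume "x \<in> carrier (pres_group S R)" "y \<in> carrier (pres_group S R)"
  then show "x \<otimes>\<^bsub>pres_group S R\<^esub> y \<in> carrier (pres_group S R)"
    using assms by (auto simp: pres_group_carrier pres_group_mult)
next
  fix x y z
  assume "x \<in> carrier (pres_group S R)" "y \<in> carrier (pres_group S R)"
    "z \<in> carrier (pres_group S R)"
  then show "x \<otimes>\<^bsub>pres_group S R\<^esub> y \<otimes>\<^bsub>pres_group S R\<^esub> z =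
      x \<otimes>\<^bsub>pres_group S R\<^esub> (y \<otimes>\<^bsub>pres_group S R\<^esub> z)"
    using assms by (auto simp: pres_group_carrier pres_group_mult)
next
  fix x
  assume "x \<in> carrier (pres_group S R)"
  then show "\<one>\<^bsub>pres_group S R\<^esub> \<otimes>\<^bsub>pres_group S R\<^esub> x = x"
    using assms pres_group_mult[of "[]" S] by (auto simp: pres_group_carrier pres_group_one)
next
  fix x
  assume "x \<in> carrier (pres_group S R)"
  then obtain w where w: "w \<in> gwords S" "x = pres_class S R w"
    by (auto simp: pres_group_carrier)
  have "pres_rel S R (inverse_word w @ w) []"
    using pres_rel_append_inverse_word[of "inverse_word w" S R] w assms by simp
  then have "pres_class S R (inverse_word w) \<otimes>\<^bsub>pres_group S R\<^esub> x = \<one>\<^bsub>pres_group S R\<^esub>"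
    using w assms by (simp add: pres_group_mult pres_group_one pres_class_eq)
  then show "\<exists>y\<in>carrier (pres_group S R). y \<otimes>\<^bsub>pres_group S R\<^esub> x = \<one>\<^bsub>pres_group S R\<^esub>"
    using w by (auto simp: pres_group_carrier)
qed (simp add: pres_group_carrier pres_group_one)

definition eval_word :: "('g, 'm) monoid_scheme \<Rightarrow> ('a \<Rightarrow> 'g) \<Rightarrow> 'a gword \<Rightarrow> 'g" where
  "eval_word G f w =
     foldr (\<lambda>(a, b) acc. (if b then inv\<^bsub>G\<^esub> (f a) else f a) \<otimes>\<^bsub>G\<^esub> acc) w \<one>\<^bsub>G\<^esub>"

lemma eval_word_Nil [simp]: "eval_word G f [] = \<one>\<^bsub>G\<^esub>"
  by (simp add: eval_word_def)

lemma eval_word_Cons [simp]: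
  "eval_word G f ((a, b) # w) = (if b then inv\<^bsub>G\<^esub> (f a) else f a) \<otimes>\<^bsub>G\<^esub> eval_word G f w"
  by (simp add: eval_word_def)

lemma (in group) eval_word_closed:
  "f ` S \<subseteq> carrier G \<Longrightarrow> w \<in> gwords S \<Longrightarrow> eval_word G f w \<in> carrier G"
  by (induction w) auto

lemma (in group) eval_word_append:
  assumes "f ` S \<subseteq> carrier G" "u \<in> gwords S" "v \<in> gwords S"
  shows "eval_word G f (u @ v) = eval_word G f u \<otimes> eval_word G f v"
  using assms(2)
proof (induction u)
  case Nil
  then show ?case using eval_word_closed[OF assms(1,3)] by simp
next
  case (Cons x u)
  obtain a b where "x = (a, b)" by (cases x)
  moreover have "eval_word G f u \<in> carrier G" "eval_word G f v \<in> carrier G"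
    using Cons.prems assms eval_word_closed by auto
  ultimately show ?case
    using Cons assms(1) by (auto simp: m_assoc)
qed

lemma eval_word_cong:
  "w \<in> gwords S \<Longrightarrow> (\<And>a. a \<in> S \<Longrightarrow> f a = g a) \<Longrightarrow> eval_word G f w = eval_word G g w"
  by (induction w) auto

lemma hom_eval_word:
  assumes "group G" "group K" "h \<in> hom G K" "f ` S \<subseteq> carrier G" "w \<in> gwords S"
  shows "h (eval_word G f w) = eval_word K (h \<circ> f) w"
proof -
  interpret group_hom G K h
    using assms by (simp add: group_hom_def group_hom_axioms_def)
  show ?thesis
    using assms(5) by (induction w) (use assms(4) G.eval_word_closed[OF assms(4)] in auto)
qed

definition relations_hold :: "('g, 'm) monoid_scheme \<Rightarrow> ('a \<Rightarrow> 'g) \<Rightarrow> ('a list \<times> 'a list) set \<Rightarrow> bool" where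
  "relations_hold G f R \<longleftrightarrow> (\<forall>(l, r)\<in>R. eval_word G f (pos_word l) = eval_word G f (pos_word r))"

lemma relations_hold_cong:
  assumes "rels_over S R" "\<And>a. a \<in> S \<Longrightarrow> f a = g a"
  shows "relations_hold G f R \<longleftrightarrow> relations_hold G g R"
proof -
  have "eval_word G f (pos_word l) = eval_word G g (pos_word l)" if "set l \<subseteq> S" for l
    using that assms(2) by (intro eval_word_cong[of _ S]) auto
  then show ?thesis
    using assms(1) unfolding relations_hold_def rels_over_def by fastforce
qed

lemma (in group) eval_word_respects_pres_rel:
  assumes "f ` S \<subseteq> carrier G" "rels_over S R" "relations_hold G f R" "pres_rel S R u v"
  shows "eval_word G f u = eval_word G f v"
  using assms(4)
proof (induction rule: pres_rel.induct)
  case (cancel u v a b)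
  have "f a \<in> carrier G" "eval_word G f v \<in> carrier G"
    using cancel assms(1) eval_word_closed by auto
  then have "eval_word G f ([(a, b), (a, \<not> b)] @ v) = eval_word G f v"
    by (cases b) (simp_all add: m_assoc[symmetric])
  then show ?case
    using cancel eval_word_append[OF assms(1)] by simp
next
  case (rel l r u v)
  have "set l \<subseteq> S" "set r \<subseteq> S"
    using rel assms(2) by (auto simp: rels_over_def)
  moreover have "eval_word G f (pos_word l) = eval_word G f (pos_word r)"
    using rel assms(3) by (auto simp: relations_hold_def)
  ultimately show ?case
    using rel eval_word_append[OF assms(1)] by simp
qed auto

text \<open>Evaluates an arbitrary representative of a class; this is well defined only when the
  relations hold in \<open>G\<close> (see \<open>pres_lift_class\<close>).\<close>

definition pres_lift :: "('g, 'm) monoid_scheme \<Rightarrow> ('a \<Rightarrow> 'g) \<Rightarrow> 'a gword set \<Rightarrow> 'g" where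
  "pres_lift G f C = eval_word G f (SOME w. w \<in> C)"

context group
begin

lemma pres_lift_class:
  assumes "f ` S \<subseteq> carrier G" "rels_over S R" "relations_hold G f R" "w \<in> gwords S"
  shows "pres_lift G f (pres_class S R w) = eval_word G f w"
proof -
  have "(SOME v. v \<in> pres_class S R w) \<in> pres_class S R w"
    using pres_class_self[OF assms(4)] by (rule someI)
  then show ?thesis
    unfolding pres_lift_def pres_class_def
    using eval_word_respects_pres_rel[OF assms(1-3)] by auto
qed

lemma pres_lift_hom:
  assumes "f ` S \<subseteq> carrier G" "rels_over S R" "relations_hold G f R"
  shows "pres_lift G f \<in> hom (pres_group S R) G"
proof (rule homI)
  fix x
  assume "x \<in> carrier (pres_group S R)"
  then show "pres_lift G f x \<in> carrier G"
    using pres_lift_class[OF assms] eval_word_closed[OF assms(1)] by (auto simp: pres_group_carrier)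
next
  fix x y
  assume "x \<in> carrier (pres_group S R)" "y \<in> carrier (pres_group S R)"
  then show "pres_lift G f (x \<otimes>\<^bsub>pres_group S R\<^esub> y) = pres_lift G f x \<otimes> pres_lift G f y"
    using pres_lift_class[OF assms] pres_group_mult[OF _ _ assms(2)] eval_word_append[OF assms(1)]
    by (auto simp: pres_group_carrier)
qed

lemma pres_lift_gen:
  assumes "f ` S \<subseteq> carrier G" "rels_over S R" "relations_hold G f R" "a \<in> S"
  shows "pres_lift G f (pres_gen S R a) = f a"
  using pres_lift_class[OF assms(1-3), of "[(a, False)]"] assms(1,4) by (auto simp: pres_gen_def)

end

lemma pres_gen_in_carrier: "a \<in> S \<Longrightarrow> pres_gen S R a \<in> carrier (pres_group S R)"
  by (auto simp: pres_gen_def pres_group_carrier)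

lemma inv_pres_gen:
  assumes "rels_over S R" "a \<in> S"
  shows "inv\<^bsub>pres_group S R\<^esub> (pres_gen S R a) = pres_class S R [(a, True)]"
proof -
  interpret group "pres_group S R"
    using assms(1) by (rule group_pres_group)
  have "pres_rel S R ([] @ [(a, True), (a, \<not> True)] @ []) ([] @ [])"
    using assms by (intro pres_rel.cancel) auto
  then have "pres_class S R [(a, True)] \<otimes>\<^bsub>pres_group S R\<^esub> pres_gen S R a = \<one>\<^bsub>pres_group S R\<^esub>"
    using assms by (simp add: pres_gen_def pres_group_mult pres_group_one pres_class_eq)
  then show ?thesis
    by (rule inv_equality) (use assms in \<open>auto simp: pres_gen_def pres_group_carrier\<close>)
qed

lemma eval_word_pres_gen:
  assumes "rels_over S R" "w \<in> gwords S"
  shows "eval_word (pres_group S R) (pres_gen S R) w = pres_class S R w"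
  using assms(2)
proof (induction w)
  case Nil
  then show ?case by (simp add: pres_group_one)
next
  case (Cons x w)
  obtain a b where x: "x = (a, b)" by (cases x)
  have "pres_class S R ((a, b) # w) = pres_class S R [(a, b)] \<otimes>\<^bsub>pres_group S R\<^esub> pres_class S R w"
    using pres_group_mult[OF _ _ assms(1), of "[(a, b)]" w] Cons x by simp
  then show ?case
    using Cons x inv_pres_gen[OF assms(1)] by (simp add: pres_gen_def)
qed

lemma relations_hold_pres_gen:
  assumes "rels_over S R"
  shows "relations_hold (pres_group S R) (pres_gen S R) R"
  unfolding relations_hold_def
proof (clarify)
  fix l r
  assume lr: "(l, r) \<in> R"
  then have "set l \<subseteq> S" "set r \<subseteq> S"
    using assms by (auto simp: rels_over_def)
  moreover have "pres_rel S R ([] @ pos_word l @ []) ([] @ pos_word r @ [])"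
    using lr by (intro pres_rel.rel) auto
  ultimately show "eval_word (pres_group S R) (pres_gen S R) (pos_word l) =
      eval_word (pres_group S R) (pres_gen S R) (pos_word r)"
    using assms by (simp add: eval_word_pres_gen pres_class_eq)
qed

lemma pres_group_hom_eqI:
  assumes "rels_over S R" "group K"
    and "h \<in> hom (pres_group S R) K" "h' \<in> hom (pres_group S R) K"
    and "\<And>a. a \<in> S \<Longrightarrow> h (pres_gen S R a) = h' (pres_gen S R a)"
    and "x \<in> carrier (pres_group S R)"
  shows "h x = h' x"
proof -
  obtain w where w: "w \<in> gwords S" "x = pres_class S R w"
    using assms(6) by (auto simp: pres_group_carrier)
  have gens: "pres_gen S R ` S \<subseteq> carrier (pres_group S R)"
    by (auto intro: pres_gen_in_carrier)
  note hom_eval = hom_eval_word[OF group_pres_group[OF assms(1)] assms(2) _ gens w(1)]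
  have "h x = eval_word K (h \<circ> pres_gen S R) w"
    using hom_eval[OF assms(3)] eval_word_pres_gen[OF assms(1) w(1)] w(2) by simp
  also have "\<dots> = eval_word K (h' \<circ> pres_gen S R) w"
    using w(1) assms(5) by (intro eval_word_cong) auto
  also have "\<dots> = h' x"
    using hom_eval[OF assms(4)] eval_word_pres_gen[OF assms(1) w(1)] w(2) by simp
  finally show ?thesis .
qed

lemma pres_group_endo_eq_id:
  assumes "rels_over S R" "h \<in> hom (pres_group S R) (pres_group S R)"
    and "\<And>a. a \<in> S \<Longrightarrow> h (pres_gen S R a) = pres_gen S R a"
    and "x \<in> carrier (pres_group S R)"
  shows "h x = x"
proof -
  have "(\<lambda>y. y) \<in> hom (pres_group S R) (pres_group S R)"
    by (auto simp: hom_def)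
  from pres_group_hom_eqI[OF assms(1) group_pres_group[OF assms(1)] assms(2) this assms(3,4)]
  show ?thesis .
qed

section \<open>Positive monoids\<close>

lemma mpres_rel_imp_pres_rel:
  assumes "mpres_rel S R u v"
  shows "pres_rel S R (pos_word u) (pos_word v)"
  using assms
proof (induction rule: mpres_rel.induct)
  case (refl w)
  then show ?case by (simp add: pres_rel.refl)
next
  case (sym u w)
  show ?case using sym.IH by (rule pres_rel.sym)
next
  case (trans u v w)
  show ?case using trans.IH by (rule pres_rel.trans)
next
  case (rel l r u v)
  then show ?case using pres_rel.rel[of l r R "pos_word u" S "pos_word v"] by simp
qed

lemma mon_to_grp_class:
  assumes "set w \<subseteq> S"
  shows "mon_to_grp S R (mpres_class S R w) = pres_class S R (pos_word w)"
proof -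
  have "w \<in> mpres_class S R w"
    using assms by (simp add: mpres_class_def mpres_rel.refl)
  then have "(SOME v. v \<in> mpres_class S R w) \<in> mpres_class S R w"
    by (rule someI)
  then have "pres_rel S R (pos_word w) (pos_word (SOME v. v \<in> mpres_class S R w))"
    unfolding mpres_class_def by (auto intro: mpres_rel_imp_pres_rel)
  then show ?thesis
    unfolding mon_to_grp_def by (simp add: pres_class_eq)
qed

lemma mon_to_grp_image:
  "mon_to_grp S R ` carrier (mpres_monoid S R) = (\<lambda>w. pres_class S R (pos_word w)) ` lists S"
proof -
  have "mon_to_grp S R ` carrier (mpres_monoid S R) =
      (\<lambda>w. mon_to_grp S R (mpres_class S R w)) ` lists S"
    by (simp add: mpres_monoid_def image_image)
  also have "\<dots> = (\<lambda>w. pres_class S R (pos_word w)) ` lists S"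
    by (intro image_cong refl mon_to_grp_class) auto
  finally show ?thesis .
qed

lemma (in group) monoid_generated_image:
  assumes "f ` S \<subseteq> carrier G"
  shows "monoid_generated G (f ` S) = (\<lambda>w. eval_word G f (pos_word w)) ` lists S"
proof (intro equalityI subsetI)
  fix x
  assume "x \<in> monoid_generated G (f ` S)"
  then show "x \<in> (\<lambda>w. eval_word G f (pos_word w)) ` lists S"
  proof (induction rule: monoid_generated.induct)
    case one
    show ?case by (rule image_eqI[of _ _ "[]"]) simp_all
  next
    case (step x a)
    obtain w where w: "w \<in> lists S" "x = eval_word G f (pos_word w)"
      using step.IH by blast
    obtain i where i: "i \<in> S" "a = f i"
      using step.hyps(2) by blast
    have "f i \<in> carrier G"
      using i assms by auto
    then have "eval_word G f (pos_word (w @ [i])) = x \<otimes> a"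
      using w i assms eval_word_append[of f S "pos_word w" "pos_word [i]"]
      by (auto simp: in_lists_conv_set)
    then show ?case
      using w i by (intro image_eqI[of _ _ "w @ [i]"]) auto
  qed
next
  fix x
  assume "x \<in> (\<lambda>w. eval_word G f (pos_word w)) ` lists S"
  then obtain w where w: "w \<in> lists S" "x = eval_word G f (pos_word w)"
    by auto
  have "eval_word G f (pos_word w) \<in> monoid_generated G (f ` S)"
    using w(1)
  proof (induction w rule: rev_induct)
    case Nil
    then show ?case by (simp add: monoid_generated.one)
  next
    case (snoc i w)
    have "f i \<in> carrier G"
      using snoc.prems assms by auto
    then have "eval_word G f (pos_word (w @ [i])) = eval_word G f (pos_word w) \<otimes> f i"
      using snoc.prems assms eval_word_append[of f S "pos_word w" "pos_word [i]"]
      by (auto simp: in_lists_conv_set)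
    then show ?case
      using snoc by (auto intro: monoid_generated.step)
  qed
  then show "x \<in> monoid_generated G (f ` S)"
    using w by simp
qed

section \<open>Prefix products\<close>

primrec prefix_prod :: "('g, 'm) monoid_scheme \<Rightarrow> (nat \<Rightarrow> 'g) \<Rightarrow> nat \<Rightarrow> 'g" where
  "prefix_prod G f 0 = \<one>\<^bsub>G\<^esub>"
| "prefix_prod G f (Suc i) = prefix_prod G f i \<otimes>\<^bsub>G\<^esub> f (Suc i)"

definition prefix_quot :: "('g, 'm) monoid_scheme \<Rightarrow> (nat \<Rightarrow> 'g) \<Rightarrow> nat \<Rightarrow> 'g" where
  "prefix_quot G r i = inv\<^bsub>G\<^esub> (r (i - 1)) \<otimes>\<^bsub>G\<^esub> r i"

context group
begin

lemma prefix_prod_closed: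
  "(\<And>k. 1 \<le> k \<Longrightarrow> k \<le> i \<Longrightarrow> f k \<in> carrier G) \<Longrightarrow> prefix_prod G f i \<in> carrier G"
  by (induction i) auto

lemma eval_word_upt_eq_prefix_prod:
  assumes "f ` {1..i} \<subseteq> carrier G"
  shows "eval_word G f (pos_word [1..<i + 1]) = prefix_prod G f i"
  using assms
proof (induction i)
  case (Suc i)
  have "f ` {1..i} \<subseteq> carrier G"
    using Suc.prems by auto
  then have IH: "eval_word G f (pos_word [1..<i + 1]) = prefix_prod G f i"
    by (rule Suc.IH)
  have "f (Suc i) \<in> carrier G"
    using Suc.prems by auto
  have "eval_word G f (pos_word [1..<i + 1] @ pos_word [Suc i]) =
      eval_word G f (pos_word [1..<i + 1]) \<otimes> eval_word G f (pos_word [Suc i])"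
    using Suc.prems by (intro eval_word_append[of f "{1..Suc i}"]) auto
  moreover have "[1..<Suc i + 1] = [1..<i + 1] @ [Suc i]"
    by simp
  ultimately show ?case
    using IH \<open>f (Suc i) \<in> carrier G\<close> by (simp del: upt_Suc)
qed simp

lemma prefix_prod_prefix_quot:
  assumes "r 0 = \<one>" "\<And>k. k \<le> i \<Longrightarrow> r k \<in> carrier G"
  shows "prefix_prod G (prefix_quot G r) i = r i"
  using assms
  by (induction i) (simp_all add: prefix_quot_def m_assoc[symmetric])

lemma prefix_quot_prefix_prod:
  assumes "1 \<le> i" "\<And>k. 1 \<le> k \<Longrightarrow> k \<le> i \<Longrightarrow> f k \<in> carrier G"
  shows "prefix_quot G (prefix_prod G f) i = f i"
proof -
  obtain j where i: "i = Suc j" using assms(1) by (cases i) auto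
  have "prefix_prod G f j \<in> carrier G"
    using assms(2) i by (intro prefix_prod_closed) auto
  then show ?thesis
    using assms(2) i by (simp add: prefix_quot_def m_assoc[symmetric])
qed

end

section \<open>Braid relations and the relations of \<open>H\<^sub>n\<close> in an arbitrary group\<close>

locale braid_gens = group +
  fixes n :: nat and s :: "nat \<Rightarrow> 'a"
  assumes s_closed [simp]: "1 \<le> i \<Longrightarrow> i \<le> n \<Longrightarrow> s i \<in> carrier G"
    and s_far_comm: "1 \<le> i \<Longrightarrow> i + 2 \<le> j \<Longrightarrow> j \<le> n \<Longrightarrow> s j \<otimes> s i = s i \<otimes> s j"
    and s_braid: "1 \<le> i \<Longrightarrow> i < n \<Longrightarrow> s i \<otimes> s (i + 1) \<otimes> s i = s (i + 1) \<otimes> s i \<otimes> s (i + 1)"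

locale H_gens = group +
  fixes n :: nat and r :: "nat \<Rightarrow> 'a"
  assumes r_zero: "r 0 = \<one>"
    and r_closed [simp]: "i \<le> n \<Longrightarrow> r i \<in> carrier G"
    and r_rel: "1 \<le> i \<Longrightarrow> i < j \<Longrightarrow> j \<le> n \<Longrightarrow> r 1 \<otimes> r j \<otimes> r i = r (i + 1) \<otimes> r j"

lemma (in group) braid_gens_iff:
  "braid_gens G n s \<longleftrightarrow> s ` {1..n} \<subseteq> carrier G \<and> relations_hold G s (braid_rels n)"
proof
  assume "braid_gens G n s"
  then interpret braid_gens G n s .
  have comm: "s i \<otimes> s j = s j \<otimes> s i"
    if "1 \<le> i" "1 \<le> j" "i \<le> n" "j \<le> n" "i + 1 < j \<or> j + 1 < i" for i j
    using that s_far_comm[of i j] s_far_comm[of j i] by force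
  show "s ` {1..n} \<subseteq> carrier G \<and> relations_hold G s (braid_rels n)"
    unfolding relations_hold_def braid_rels_def
    using s_braid by (auto simp: m_assoc) (auto intro!: comm)
next
  assume *: "s ` {1..n} \<subseteq> carrier G \<and> relations_hold G s (braid_rels n)"
  show "braid_gens G n s"
  proof
    fix i j
    assume "1 \<le> i" "i + 2 \<le> j" "j \<le> n"
    then have "([j, i], [i, j]) \<in> braid_rels n"
      by (auto simp: braid_rels_def)
    moreover have "s i \<in> carrier G" "s j \<in> carrier G"
      using * \<open>1 \<le> i\<close> \<open>i + 2 \<le> j\<close> \<open>j \<le> n\<close> by auto
    ultimately show "s j \<otimes> s i = s i \<otimes> s j"
      using * by (auto simp: relations_hold_def)
  next
    fix i
    assume "1 \<le> i" "i < n"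
    then have "([i, i + 1, i], [i + 1, i, i + 1]) \<in> braid_rels n"
      by (auto simp: braid_rels_def)
    moreover have "s i \<in> carrier G" "s (i + 1) \<in> carrier G"
      using * \<open>1 \<le> i\<close> \<open>i < n\<close> by auto
    ultimately show "s i \<otimes> s (i + 1) \<otimes> s i = s (i + 1) \<otimes> s i \<otimes> s (i + 1)"
      using * by (auto simp: relations_hold_def m_assoc)
  qed (use * in auto)
qed

lemma (in group) H_gens_iff:
  "H_gens G n r \<longleftrightarrow> r 0 = \<one> \<and> r ` {1..n} \<subseteq> carrier G \<and> relations_hold G r (H_rels n)"
proof
  assume "H_gens G n r"
  then interpret H_gens G n r .
  show "r 0 = \<one> \<and> r ` {1..n} \<subseteq> carrier G \<and> relations_hold G r (H_rels n)"
    unfolding relations_hold_def H_rels_def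
    using r_zero r_rel by (auto simp: m_assoc)
next
  assume *: "r 0 = \<one> \<and> r ` {1..n} \<subseteq> carrier G \<and> relations_hold G r (H_rels n)"
  show "H_gens G n r"
  proof
    fix i
    assume "i \<le> n"
    then show "r i \<in> carrier G"
      using * by (cases "i = 0") auto
  next
    fix i j
    assume "1 \<le> i" "i < j" "j \<le> n"
    then have "([1, j, i], [i + 1, j]) \<in> H_rels n"
      by (auto simp: H_rels_def)
    moreover have "r 1 \<in> carrier G" "r i \<in> carrier G" "r j \<in> carrier G" "r (i + 1) \<in> carrier G"
      using * \<open>1 \<le> i\<close> \<open>i < j\<close> \<open>j \<le> n\<close> by auto
    ultimately show "r 1 \<otimes> r j \<otimes> r i = r (i + 1) \<otimes> r j"
      using * by (auto simp: relations_hold_def m_assoc)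
  qed (use * in auto)
qed

context braid_gens
begin

lemma prefix_prod_s_closed [simp]: "i \<le> n \<Longrightarrow> prefix_prod G s i \<in> carrier G"
  by (rule prefix_prod_closed) auto

lemma prefix_prod_shifted_closed [simp]:
  "i + 1 \<le> n \<Longrightarrow> prefix_prod G (\<lambda>k. s (Suc k)) i \<in> carrier G"
  by (rule prefix_prod_closed) auto

lemma s_prefix_prod_comm:
  "p + 2 \<le> m \<Longrightarrow> m \<le> n \<Longrightarrow> s m \<otimes> prefix_prod G s p = prefix_prod G s p \<otimes> s m"
proof (induction p)
  case (Suc p)
  have "s m \<otimes> prefix_prod G s (Suc p) = (s m \<otimes> prefix_prod G s p) \<otimes> s (Suc p)"
    using Suc.prems by (simp add: m_assoc)
  also have "\<dots> = prefix_prod G s p \<otimes> (s m \<otimes> s (Suc p))"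
    using Suc by (simp add: m_assoc)
  also have "\<dots> = prefix_prod G s p \<otimes> (s (Suc p) \<otimes> s m)"
    using Suc.prems s_far_comm[of "Suc p" m] by simp
  also have "\<dots> = prefix_prod G s (Suc p) \<otimes> s m"
    using Suc.prems by (simp add: m_assoc)
  finally show ?case .
qed simp

lemma prefix_prod_conj_s:
  assumes "1 \<le> k" "k < j" "j \<le> n"
  shows "prefix_prod G s j \<otimes> s k = s (k + 1) \<otimes> prefix_prod G s j"
proof -
  have "Suc k \<le> j" using assms(2) by simp
  then show ?thesis
    using assms(3)
  proof (induction j rule: dec_induct)
    case base
    obtain k' where k: "k = Suc k'" using assms(1) by (cases k) auto
    have "prefix_prod G s (Suc k) \<otimes> s k = prefix_prod G s k' \<otimes> (s k \<otimes> s (k + 1) \<otimes> s k)"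
      using base k by (simp add: m_assoc)
    also have "\<dots> = prefix_prod G s k' \<otimes> (s (k + 1) \<otimes> s k \<otimes> s (k + 1))"
      using base assms(1) s_braid[of k] by simp
    also have "\<dots> = (s (k + 1) \<otimes> prefix_prod G s k') \<otimes> (s k \<otimes> s (k + 1))"
      using base k s_prefix_prod_comm[of k' "k + 1"] by (simp add: m_assoc)
    also have "\<dots> = s (k + 1) \<otimes> prefix_prod G s (Suc k)"
      using base k by (simp add: m_assoc)
    finally show ?case .
  next
    case (step m)
    have "prefix_prod G s (Suc m) \<otimes> s k = prefix_prod G s m \<otimes> (s (Suc m) \<otimes> s k)"
      using step assms(1) by (simp add: m_assoc)
    also have "\<dots> = (prefix_prod G s m \<otimes> s k) \<otimes> s (Suc m)"
      using step.hyps step.prems assms(1) s_far_comm[of k "Suc m"] by (simp add: m_assoc)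
    also have "\<dots> = s (k + 1) \<otimes> prefix_prod G s (Suc m)"
      using step assms(1) by (simp add: m_assoc[symmetric])
    finally show ?case .
  qed
qed

lemma prefix_prod_mult_prefix_prod:
  "i < j \<Longrightarrow> j \<le> n \<Longrightarrow>
    prefix_prod G s j \<otimes> prefix_prod G s i = prefix_prod G (\<lambda>k. s (Suc k)) i \<otimes> prefix_prod G s j"
proof (induction i)
  case (Suc i)
  have "prefix_prod G s j \<otimes> prefix_prod G s (Suc i) = (prefix_prod G s j \<otimes> prefix_prod G s i) \<otimes> s (Suc i)"
    using Suc.prems by (simp add: m_assoc)
  also have "\<dots> = prefix_prod G (\<lambda>k. s (Suc k)) i \<otimes> (prefix_prod G s j \<otimes> s (Suc i))"
    using Suc by (simp add: m_assoc)
  also have "\<dots> = prefix_prod G (\<lambda>k. s (Suc k)) i \<otimes> (s (i + 2) \<otimes> prefix_prod G s j)"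
    using Suc.prems prefix_prod_conj_s[of "Suc i" j] by simp
  also have "\<dots> = prefix_prod G (\<lambda>k. s (Suc k)) (Suc i) \<otimes> prefix_prod G s j"
    using Suc.prems by (simp add: m_assoc)
  finally show ?case .
qed simp

lemma s_one_mult_shifted:
  "i + 1 \<le> n \<Longrightarrow> s 1 \<otimes> prefix_prod G (\<lambda>k. s (Suc k)) i = prefix_prod G s (i + 1)"
proof (induction i)
  case (Suc i)
  then show ?case by (simp add: m_assoc[symmetric])
qed simp

lemma H_gens_prefix_prod: "H_gens G n (prefix_prod G s)"
proof
  fix i j
  assume ij: "1 \<le> i" "i < j" "j \<le> n"
  have "prefix_prod G s 1 \<otimes> prefix_prod G s j \<otimes> prefix_prod G s i =
      s 1 \<otimes> prefix_prod G (\<lambda>k. s (Suc k)) i \<otimes> prefix_prod G s j"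
    using ij prefix_prod_mult_prefix_prod[of i j] by (simp add: m_assoc)
  also have "\<dots> = prefix_prod G s (i + 1) \<otimes> prefix_prod G s j"
    using ij s_one_mult_shifted[of i] by simp
  finally show "prefix_prod G s 1 \<otimes> prefix_prod G s j \<otimes> prefix_prod G s i =
      prefix_prod G s (i + 1) \<otimes> prefix_prod G s j" .
qed simp_all

end

lemma (in group) inv_conj_swap:
  assumes "x \<in> carrier G" "a \<in> carrier G" "b \<in> carrier G" "x \<otimes> a = b \<otimes> x"
  shows "a \<otimes> inv x = inv x \<otimes> b"
proof -
  have "inv x \<otimes> b = inv x \<otimes> ((b \<otimes> x) \<otimes> inv x)"
    using assms by (simp add: m_assoc)
  also have "\<dots> = inv x \<otimes> ((x \<otimes> a) \<otimes> inv x)"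
    using assms(4) by simp
  also have "\<dots> = a \<otimes> inv x"
    using assms(1-3) by (simp add: m_assoc[symmetric])
  finally show ?thesis by simp
qed

context H_gens
begin

lemma prefix_quot_closed [simp]: "1 \<le> i \<Longrightarrow> i \<le> n \<Longrightarrow> prefix_quot G r i \<in> carrier G"
  by (simp add: prefix_quot_def)

lemma r_eq_mult_prefix_quot: "1 \<le> m \<Longrightarrow> m \<le> n \<Longrightarrow> r m = r (m - 1) \<otimes> prefix_quot G r m"
  by (simp add: prefix_quot_def m_assoc[symmetric])

lemma r_mult_r:
  assumes "1 \<le> k" "k < j" "j \<le> n"
  shows "r k \<otimes> r j = r 1 \<otimes> r j \<otimes> r (k - 1)"
proof (cases "k = 1")
  case True
  then show ?thesis using assms by (simp add: r_zero)
next
  case False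
  then show ?thesis using assms r_rel[of "k - 1" j] by simp
qed

lemma r_conj_prefix_quot:
  assumes "1 \<le> k" "k < j" "j \<le> n"
  shows "r j \<otimes> prefix_quot G r k = prefix_quot G r (k + 1) \<otimes> r j"
proof -
  have closed: "r k \<in> carrier G" "r j \<in> carrier G" "r (k - 1) \<in> carrier G" "r 1 \<in> carrier G"
    using assms by auto
  have "r 1 \<otimes> r j = (r k \<otimes> r j) \<otimes> inv (r (k - 1))"
    using inv_solve_right[of "r 1 \<otimes> r j" "r k \<otimes> r j" "r (k - 1)"] closed r_mult_r[OF assms]
    by simp
  then have swap: "r j \<otimes> inv (r (k - 1)) = inv (r k) \<otimes> (r 1 \<otimes> r j)"
    using inv_solve_left[of "r j \<otimes> inv (r (k - 1))" "r k" "r 1 \<otimes> r j"] closed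
    by (simp add: m_assoc)
  have "r j \<otimes> prefix_quot G r k = (r j \<otimes> inv (r (k - 1))) \<otimes> r k"
    using closed by (simp add: prefix_quot_def m_assoc)
  also have "\<dots> = inv (r k) \<otimes> (r 1 \<otimes> r j \<otimes> r k)"
    using swap closed by (simp add: m_assoc)
  also have "\<dots> = inv (r k) \<otimes> (r (k + 1) \<otimes> r j)"
    using r_rel[of k j] assms by simp
  also have "\<dots> = prefix_quot G r (k + 1) \<otimes> r j"
    using closed assms by (simp add: prefix_quot_def m_assoc)
  finally show ?thesis .
qed

lemma prefix_quot_far_comm:
  assumes "1 \<le> i" "i + 2 \<le> k" "k \<le> n"
  shows "prefix_quot G r k \<otimes> prefix_quot G r i = prefix_quot G r i \<otimes> prefix_quot G r k"
proof -
  have swap: "prefix_quot G r i \<otimes> inv (r (k - 1)) = inv (r (k - 1)) \<otimes> prefix_quot G r (i + 1)"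
    using assms r_conj_prefix_quot[of i "k - 1"] by (intro inv_conj_swap) auto
  have "prefix_quot G r i \<otimes> prefix_quot G r k = (prefix_quot G r i \<otimes> inv (r (k - 1))) \<otimes> r k"
    using assms by (simp add: prefix_quot_def m_assoc)
  also have "\<dots> = inv (r (k - 1)) \<otimes> (prefix_quot G r (i + 1) \<otimes> r k)"
    using swap assms by (simp add: m_assoc)
  also have "\<dots> = inv (r (k - 1)) \<otimes> (r k \<otimes> prefix_quot G r i)"
    using r_conj_prefix_quot[of i k] assms by simp
  also have "\<dots> = prefix_quot G r k \<otimes> prefix_quot G r i"
    using assms by (simp add: prefix_quot_def m_assoc)
  finally show ?thesis by simp
qed

lemma prefix_quot_r_comm:
  "p + 2 \<le> m \<Longrightarrow> m \<le> n \<Longrightarrow> prefix_quot G r m \<otimes> r p = r p \<otimes> prefix_quot G r m"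
proof (induction p)
  case 0
  then show ?case by (simp add: r_zero)
next
  case (Suc p)
  have "prefix_quot G r m \<otimes> r (Suc p) = (prefix_quot G r m \<otimes> r p) \<otimes> prefix_quot G r (Suc p)"
    using Suc.prems r_eq_mult_prefix_quot[of "Suc p"] by (simp add: m_assoc)
  also have "\<dots> = r p \<otimes> (prefix_quot G r m \<otimes> prefix_quot G r (Suc p))"
    using Suc by (simp add: m_assoc)
  also have "\<dots> = r p \<otimes> (prefix_quot G r (Suc p) \<otimes> prefix_quot G r m)"
    using Suc.prems prefix_quot_far_comm[of "Suc p" m] by simp
  also have "\<dots> = r (Suc p) \<otimes> prefix_quot G r m"
    using Suc.prems r_eq_mult_prefix_quot[of "Suc p"] by (simp add: m_assoc)
  finally show ?case .
qed

lemma prefix_quot_braid: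
  assumes "1 \<le> k" "k < n"
  shows "prefix_quot G r k \<otimes> prefix_quot G r (k + 1) \<otimes> prefix_quot G r k =
    prefix_quot G r (k + 1) \<otimes> prefix_quot G r k \<otimes> prefix_quot G r (k + 1)"
proof -
  let ?q = "prefix_quot G r"
  have closed: "r (k - 1) \<in> carrier G" "?q k \<in> carrier G" "?q (k + 1) \<in> carrier G"
    using assms by auto
  have r_succ: "r (k + 1) = r (k - 1) \<otimes> ?q k \<otimes> ?q (k + 1)"
    using assms r_eq_mult_prefix_quot[of k] r_eq_mult_prefix_quot[of "k + 1"] by simp
  have "r (k - 1) \<otimes> (?q k \<otimes> ?q (k + 1) \<otimes> ?q k) = r (k + 1) \<otimes> ?q k"
    using r_succ closed by (simp add: m_assoc)
  also have "\<dots> = ?q (k + 1) \<otimes> r (k + 1)"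
    using r_conj_prefix_quot[of k "k + 1"] assms by simp
  also have "\<dots> = (?q (k + 1) \<otimes> r (k - 1)) \<otimes> (?q k \<otimes> ?q (k + 1))"
    using r_succ closed by (simp add: m_assoc)
  also have "\<dots> = r (k - 1) \<otimes> (?q (k + 1) \<otimes> ?q k \<otimes> ?q (k + 1))"
    using prefix_quot_r_comm[of "k - 1" "k + 1"] assms closed by (simp add: m_assoc)
  finally show ?thesis
    using closed by simp
qed

lemma braid_gens_prefix_quot: "braid_gens G n (prefix_quot G r)"
proof
  fix i
  assume "1 \<le> i" "i < n"
  then show "prefix_quot G r i \<otimes> prefix_quot G r (i + 1) \<otimes> prefix_quot G r i =
      prefix_quot G r (i + 1) \<otimes> prefix_quot G r i \<otimes> prefix_quot G r (i + 1)"
    by (rule prefix_quot_braid)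
qed (simp_all add: prefix_quot_far_comm)

end

section \<open>The isomorphism\<close>

lemma rels_over_braid_rels: "rels_over {1..n} (braid_rels n)"
  by (auto simp: rels_over_def braid_rels_def)

lemma rels_over_H_rels: "rels_over {1..n} (H_rels n)"
  by (auto simp: rels_over_def H_rels_def)

lemma group_Braid: "group (Braid n)"
  unfolding Braid_def by (rule group_pres_group[OF rels_over_braid_rels])

lemma group_Hgrp: "group (Hgrp n)"
  unfolding Hgrp_def by (rule group_pres_group[OF rels_over_H_rels])

lemma braid_gens_sigma: "braid_gens (Braid n) n (sigma n)"
  using group.braid_gens_iff[OF group_Braid] relations_hold_pres_gen[OF rels_over_braid_rels]
  by (auto simp: Braid_def sigma_def[abs_def] intro: pres_gen_in_carrier)

lemma H_gens_rho: "H_gens (Hgrp n) n (rho n)"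
proof -
  have "relations_hold (Hgrp n) (pres_gen {1..n} (H_rels n)) (H_rels n)"
    unfolding Hgrp_def by (rule relations_hold_pres_gen[OF rels_over_H_rels])
  moreover have "rho n a = pres_gen {1..n} (H_rels n) a" if "a \<in> {1..n}" for a
    using that by (simp add: rho_def)
  ultimately have "relations_hold (Hgrp n) (rho n) (H_rels n)"
    using relations_hold_cong[OF rels_over_H_rels] by blast
  then show ?thesis
    using group.H_gens_iff[OF group_Hgrp]
    by (auto simp: rho_def Hgrp_def intro: pres_gen_in_carrier)
qed

lemma sigma_prefix_eq_prefix_prod:
  assumes "i \<le> n"
  shows "sigma_prefix n i = prefix_prod (Braid n) (sigma n) i"
proof -
  have "sigma_prefix n i = eval_word (Braid n) (sigma n) (pos_word [1..<i + 1])"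
    using eval_word_pres_gen[OF rels_over_braid_rels, of "pos_word [1..<i + 1]" n] assms
    by (simp add: sigma_prefix_def Braid_def sigma_def[abs_def] subset_iff del: upt_Suc)
  also have "\<dots> = prefix_prod (Braid n) (sigma n) i"
    using assms braid_gens.s_closed[OF braid_gens_sigma]
    by (intro group.eval_word_upt_eq_prefix_prod[OF group_Braid]) auto
  finally show ?thesis .
qed

lemma H_gens_prefix_prod_sigma: "H_gens (Braid n) n (prefix_prod (Braid n) (sigma n))"
  by (rule braid_gens.H_gens_prefix_prod[OF braid_gens_sigma])

lemma braid_gens_prefix_quot_rho: "braid_gens (Hgrp n) n (prefix_quot (Hgrp n) (rho n))"
  by (rule H_gens.braid_gens_prefix_quot[OF H_gens_rho])

lemma sigma_prefix_closed: "sigma_prefix n ` {1..n} \<subseteq> carrier (Braid n)"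
  using H_gens.r_closed[OF H_gens_prefix_prod_sigma] by (auto simp: sigma_prefix_eq_prefix_prod)

lemma relations_hold_sigma_prefix: "relations_hold (Braid n) (sigma_prefix n) (H_rels n)"
proof -
  have "relations_hold (Braid n) (prefix_prod (Braid n) (sigma n)) (H_rels n)"
    using H_gens_prefix_prod_sigma unfolding group.H_gens_iff[OF group_Braid] by simp
  moreover have "sigma_prefix n a = prefix_prod (Braid n) (sigma n) a" if "a \<in> {1..n}" for a
    using that by (simp add: sigma_prefix_eq_prefix_prod)
  ultimately show ?thesis
    using relations_hold_cong[OF rels_over_H_rels] by blast
qed

lemma prefix_quot_rho_closed: "prefix_quot (Hgrp n) (rho n) ` {1..n} \<subseteq> carrier (Hgrp n)"
  using braid_gens_prefix_quot_rho unfolding group.braid_gens_iff[OF group_Hgrp] by (rule conjunct1)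

lemma relations_hold_prefix_quot_rho:
  "relations_hold (Hgrp n) (prefix_quot (Hgrp n) (rho n)) (braid_rels n)"
  using braid_gens_prefix_quot_rho unfolding group.braid_gens_iff[OF group_Hgrp] by (rule conjunct2)

definition H_to_braid :: "nat \<Rightarrow> nat gword set \<Rightarrow> nat gword set" where
  "H_to_braid n = pres_lift (Braid n) (sigma_prefix n)"

definition braid_to_H :: "nat \<Rightarrow> nat gword set \<Rightarrow> nat gword set" where
  "braid_to_H n = pres_lift (Hgrp n) (prefix_quot (Hgrp n) (rho n))"

lemma H_to_braid_hom: "H_to_braid n \<in> hom (Hgrp n) (Braid n)"
  unfolding H_to_braid_def Hgrp_def
  by (rule group.pres_lift_hom[OF group_Braid sigma_prefix_closed rels_over_H_rels
        relations_hold_sigma_prefix])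

lemma braid_to_H_hom: "braid_to_H n \<in> hom (Braid n) (Hgrp n)"
  unfolding braid_to_H_def Braid_def
  by (rule group.pres_lift_hom[OF group_Hgrp prefix_quot_rho_closed rels_over_braid_rels
        relations_hold_prefix_quot_rho])

lemma H_to_braid_rho:
  assumes "i \<le> n"
  shows "H_to_braid n (rho n i) = sigma_prefix n i"
proof (cases "i = 0")
  case True
  then show ?thesis
    using hom_one[OF H_to_braid_hom group_Hgrp group_Braid] sigma_prefix_eq_prefix_prod[of 0 n]
    by (simp add: rho_def)
next
  case False
  then show ?thesis
    unfolding H_to_braid_def rho_def
    using assms group.pres_lift_gen[OF group_Braid sigma_prefix_closed rels_over_H_rels
        relations_hold_sigma_prefix]
    by simp
qed

lemma braid_to_H_sigma:
  "i \<in> {1..n} \<Longrightarrow> braid_to_H n (sigma n i) = prefix_quot (Hgrp n) (rho n) i"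
  unfolding braid_to_H_def sigma_def
  by (rule group.pres_lift_gen[OF group_Hgrp prefix_quot_rho_closed rels_over_braid_rels
        relations_hold_prefix_quot_rho])

lemma braid_to_H_sigma_prefix: "i \<le> n \<Longrightarrow> braid_to_H n (sigma_prefix n i) = rho n i"
proof -
  assume i: "i \<le> n"
  interpret H_gens "Hgrp n" n "rho n" by (rule H_gens_rho)
  have "braid_to_H n (sigma_prefix n i) =
      eval_word (Hgrp n) (prefix_quot (Hgrp n) (rho n)) (pos_word [1..<i + 1])"
    unfolding braid_to_H_def sigma_prefix_def
    using i pres_lift_class[OF prefix_quot_rho_closed rels_over_braid_rels
        relations_hold_prefix_quot_rho, of "pos_word [1..<i + 1]"]
    by (simp add: subset_iff del: upt_Suc)
  also have "\<dots> = prefix_prod (Hgrp n) (prefix_quot (Hgrp n) (rho n)) i"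
    using i by (intro eval_word_upt_eq_prefix_prod) auto
  also have "\<dots> = rho n i"
    using i by (intro prefix_prod_prefix_quot r_zero) auto
  finally show ?thesis .
qed

lemma H_to_braid_prefix_quot:
  assumes "1 \<le> i" "i \<le> n"
  shows "H_to_braid n (prefix_quot (Hgrp n) (rho n) i) = sigma n i"
proof -
  interpret H: H_gens "Hgrp n" n "rho n" by (rule H_gens_rho)
  have closed: "rho n (i - 1) \<in> carrier (Hgrp n)" "rho n i \<in> carrier (Hgrp n)"
    using assms by auto
  interpret B: braid_gens "Braid n" n "sigma n" by (rule braid_gens_sigma)
  interpret \<phi>: group_hom "Hgrp n" "Braid n" "H_to_braid n"
    using H_to_braid_hom by (simp add: group_hom_def group_hom_axioms_def H.group_axioms B.group_axioms)
  have "H_to_braid n (prefix_quot (Hgrp n) (rho n) i) =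
      inv\<^bsub>Braid n\<^esub> H_to_braid n (rho n (i - 1)) \<otimes>\<^bsub>Braid n\<^esub> H_to_braid n (rho n i)"
    unfolding prefix_quot_def using closed by simp
  also have "\<dots> = prefix_quot (Braid n) (prefix_prod (Braid n) (sigma n)) i"
    using assms H_to_braid_rho[of "i - 1" n] H_to_braid_rho[of i n]
      sigma_prefix_eq_prefix_prod[of "i - 1" n] sigma_prefix_eq_prefix_prod[of i n]
    by (simp add: prefix_quot_def)
  also have "\<dots> = sigma n i"
    using assms by (intro B.prefix_quot_prefix_prod) auto
  finally show ?thesis .
qed

lemma braid_to_H_H_to_braid:
  assumes "x \<in> carrier (Hgrp n)"
  shows "braid_to_H n (H_to_braid n x) = x"
proof -
  have "(braid_to_H n \<circ> H_to_braid n) (rho n a) = rho n a" if "a \<in> {1..n}" for a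
    using that H_to_braid_rho[of a n] braid_to_H_sigma_prefix[of a n] by simp
  then show ?thesis
    using pres_group_endo_eq_id[OF rels_over_H_rels, of "braid_to_H n \<circ> H_to_braid n" n x]
      hom_compose[OF H_to_braid_hom braid_to_H_hom] assms
    by (simp add: Hgrp_def rho_def)
qed

lemma H_to_braid_braid_to_H:
  assumes "y \<in> carrier (Braid n)"
  shows "H_to_braid n (braid_to_H n y) = y"
proof -
  have "(H_to_braid n \<circ> braid_to_H n) (sigma n a) = sigma n a" if "a \<in> {1..n}" for a
    using that braid_to_H_sigma[of a n] H_to_braid_prefix_quot[of a n] by simp
  then show ?thesis
    using pres_group_endo_eq_id[OF rels_over_braid_rels, of "H_to_braid n \<circ> braid_to_H n" n y]
      hom_compose[OF braid_to_H_hom H_to_braid_hom] assms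
    by (simp add: Braid_def sigma_def)
qed

lemma H_to_braid_iso: "H_to_braid n \<in> iso (Hgrp n) (Braid n)"
proof (rule isoI[OF H_to_braid_hom])
  show "bij_betw (H_to_braid n) (carrier (Hgrp n)) (carrier (Braid n))"
    using H_to_braid_hom braid_to_H_hom H_to_braid_braid_to_H braid_to_H_H_to_braid
    by (intro bij_betwI[of _ _ _ "braid_to_H n"]) (auto simp: hom_def)
qed

lemma inv_into_H_to_braid_sigma:
  "i \<in> {1..n} \<Longrightarrow> inv_into (carrier (Hgrp n)) (H_to_braid n) (sigma n i) = prefix_quot (Hgrp n) (rho n) i"
  using H_to_braid_iso H_to_braid_prefix_quot prefix_quot_rho_closed
  by (intro inv_into_f_eq) (auto simp: iso_def bij_betw_def image_subset_iff)

lemma H_to_braid_Hmon_image: "H_to_braid n ` Hmon_image n = Sigma_mon n"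
proof -
  have "H_to_braid n ` Hmon_image n =
      (\<lambda>w. H_to_braid n (pres_class {1..n} (H_rels n) (pos_word w))) ` lists {1..n}"
    by (simp add: Hmon_image_def Hmon_def mon_to_grp_image image_image)
  also have "\<dots> = (\<lambda>w. eval_word (Braid n) (sigma_prefix n) (pos_word w)) ` lists {1..n}"
    unfolding H_to_braid_def
    using group.pres_lift_class[OF group_Braid sigma_prefix_closed rels_over_H_rels
        relations_hold_sigma_prefix]
    by (intro image_cong refl) (auto simp: in_lists_conv_set subset_iff)
  also have "\<dots> = Sigma_mon n"
    unfolding Sigma_mon_def
    by (rule group.monoid_generated_image[OF group_Braid sigma_prefix_closed, symmetric])
  finally show ?thesis .
qed

theorem proposition5p2:
  fixes n :: nat
  assumes "n \<ge> 1"
  shows "\<exists>\<phi>. \<phi> \<in> iso (Hgrp n) (Braid n)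
           \<and> (\<forall>i\<in>{1..n}. \<phi> (rho n i) = sigma_prefix n i)
           \<and> (\<forall>i\<in>{1..n}. inv_into (carrier (Hgrp n)) \<phi> (sigma n i)
                = inv\<^bsub>Hgrp n\<^esub> (rho n (i - 1)) \<otimes>\<^bsub>Hgrp n\<^esub> rho n i)
           \<and> \<phi> ` Hmon_image n = Sigma_mon n"
  using H_to_braid_iso H_to_braid_rho inv_into_H_to_braid_sigma H_to_braid_Hmon_image
  by (intro exI[of _ "H_to_braid n"]) (auto simp: prefix_quot_def)

end
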